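(* Consider $p\ge 1$ machines, machine $v$ having nonnegative real parameters $k^A_v,k^B_v,t^A_v,t^B_v$, and a real bound $L$. For $1\le v\le p$ and an integer $a\ge 0$, let $b_v(a)=\{b\in\mathbb{Z}_{\ge 0} : f_v(a,b)\le L\}$ and $$dp(v,a)=\bigcup_{\substack{x_1+\dots+x_v=a\\ x_1,\dots,x_v\in\mathbb{Z}_{\ge 0}}}\big(b_1(x_1)+\dots+b_v(x_v)\big),$$ where $+$ denotes the sumset $X+Y=\{x+y : x\in X, y\in Y\}$. Then for every $1\le v\le p$ and every integer $a\ge 0$: (1) if $dp(v,a)=\emptyset$, then $dp(v,a+\delta)=\emptyset$ for every integer $\delta>0$; (2) if $dp(v,a)\neq\emptyset$ and $dp(v,a+1)\neq\emptyset$, then at least one of the following holds: (i) $dp(v,a)\cap dp(v,a+1)\neq\emptyset$; (ii) there exists $b_0\in dp(v,a)$ with $b_0+1\in dp(v,a+1)$.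
   Context: Each machine $v$ processes jobs of two types, A and B, in batches. A schedule of machine $v$ for the task-combination $(a,b)$ is a finite sequence of batches, each a nonempty group of jobs of a single type, with consecutive batches of different types, processing exactly $a$ A-jobs and $b$ B-jobs. An A-batch of $x$ jobs takes $t^A_v+k^A_v x^2$ time units and a B-batch of $x$ jobs takes $t^B_v+k^B_v x^2$ time units on machine $v$; the time of a schedule is the sum of its batch times (empty schedule: time $0$). $f_v(a,b)$ is the minimum time over all schedules of machine $v$ for $(a,b)$. *)

theory Defs
  imports Complex_Main
begin

datatype jobtype = JA | JB

type_synonym batch = "jobtype \<times> nat"

definition is_schedule :: "nat \<Rightarrow> nat \<Rightarrow> batch list \<Rightarrow> bool" where
  "is_schedule a b s \<longleftrightarrow>
     (\<forall>bt\<in>set s. snd bt > 0) \<and>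
     (\<forall>i. Suc i < length s \<longrightarrow> fst (s ! i) \<noteq> fst (s ! Suc i)) \<and>
     sum_list (map snd (filter (\<lambda>bt. fst bt = JA) s)) = a \<and>
     sum_list (map snd (filter (\<lambda>bt. fst bt = JB) s)) = b"

fun batch_time :: "(nat \<Rightarrow> real) \<Rightarrow> (nat \<Rightarrow> real) \<Rightarrow> (nat \<Rightarrow> real) \<Rightarrow> (nat \<Rightarrow> real)
                   \<Rightarrow> nat \<Rightarrow> batch \<Rightarrow> real" where
  "batch_time kA kB tA tB v (JA, x) = tA v + kA v * real x ^ 2"
| "batch_time kA kB tA tB v (JB, x) = tB v + kB v * real x ^ 2"

definition sched_time :: "(nat \<Rightarrow> real) \<Rightarrow> (nat \<Rightarrow> real) \<Rightarrow> (nat \<Rightarrow> real) \<Rightarrow> (nat \<Rightarrow> real)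
                   \<Rightarrow> nat \<Rightarrow> batch list \<Rightarrow> real" where
  "sched_time kA kB tA tB v s = sum_list (map (batch_time kA kB tA tB v) s)"

definition fv :: "(nat \<Rightarrow> real) \<Rightarrow> (nat \<Rightarrow> real) \<Rightarrow> (nat \<Rightarrow> real) \<Rightarrow> (nat \<Rightarrow> real)
                   \<Rightarrow> nat \<Rightarrow> nat \<Rightarrow> nat \<Rightarrow> real" where
  "fv kA kB tA tB v a b = Min {sched_time kA kB tA tB v s | s. is_schedule a b s}"

definition bset :: "(nat \<Rightarrow> real) \<Rightarrow> (nat \<Rightarrow> real) \<Rightarrow> (nat \<Rightarrow> real) \<Rightarrow> (nat \<Rightarrow> real)
                   \<Rightarrow> real \<Rightarrow> nat \<Rightarrow> nat \<Rightarrow> nat set" where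
  "bset kA kB tA tB L v a = {b. fv kA kB tA tB v a b \<le> L}"

definition dp :: "(nat \<Rightarrow> real) \<Rightarrow> (nat \<Rightarrow> real) \<Rightarrow> (nat \<Rightarrow> real) \<Rightarrow> (nat \<Rightarrow> real)
                   \<Rightarrow> real \<Rightarrow> nat \<Rightarrow> nat \<Rightarrow> nat set" where
  "dp kA kB tA tB L v a =
     {c. \<exists>x y. (\<Sum>i\<in>{1..v}. x i) = a \<and>
              (\<forall>i\<in>{1..v}. y i \<in> bset kA kB tA tB L i (x i)) \<and>
              c = (\<Sum>i\<in>{1..v}. y i)}"

end

theory Submission
  imports Defs
begin

(* A schedule for (a + 1, b) can be cut right after its last A-batch; this leaves a schedule
   for (a + 1, c), where c counts the B-jobs before that batch. Removing one job from the final
   A-batch (the whole batch if it is a single job) then gives a schedule for (a, c): no two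
   B-batches become adjacent because nothing follows. With nonnegative parameters neither step
   increases the time, so every b_v(a + 1) that is nonempty meets b_v(a). Applying this to a
   machine that receives an A-job shows that dp(v, a + 1) meets dp(v, a) whenever it is
   nonempty: alternative (i) of (2) always holds, and (1) follows by induction on delta. *)

lemma is_schedule_iff:
  "is_schedule a b s \<longleftrightarrow>
     (\<forall>bt\<in>set s. snd bt > 0) \<and> distinct_adj (map fst s) \<and>
     sum_list (map snd (filter (\<lambda>bt. fst bt = JA) s)) = a \<and>
     sum_list (map snd (filter (\<lambda>bt. fst bt = JB) s)) = b"
  unfolding is_schedule_def distinct_adj_conv_nth by simp

lemma sum_list_batch_sizes:
  fixes s :: "batch list"
  shows "sum_list (map snd (filter (\<lambda>bt. fst bt = JA) s)) +
    sum_list (map snd (filter (\<lambda>bt. fst bt = JB) s)) = sum_list (map snd s)"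
proof (induction s)
  case (Cons bt s)
  then show ?case by (cases "fst bt") simp_all
qed simp

lemma length_le_sum_list_pos:
  fixes xs :: "nat list"
  shows "\<forall>x\<in>set xs. x > 0 \<Longrightarrow> length xs \<le> sum_list xs"
  by (induction xs) auto

lemma finite_schedules: "finite {s. is_schedule a b s}"
proof (rule finite_subset)
  show "{s. is_schedule a b s} \<subseteq> {s. set s \<subseteq> {JA, JB} \<times> {..a + b} \<and> length s \<le> a + b}"
  proof
    fix s assume "s \<in> {s. is_schedule a b s}"
    then have sched: "is_schedule a b s" by simp
    then have total: "sum_list (map snd s) = a + b"
      using sum_list_batch_sizes[of s] unfolding is_schedule_def by simp
    then have "length s \<le> a + b"
      using sched length_le_sum_list_pos[of "map snd s"] unfolding is_schedule_def by simp
    moreover have "set s \<subseteq> {JA, JB} \<times> {..a + b}"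
    proof
      fix bt assume "bt \<in> set s"
      then have "snd bt \<le> a + b"
        using member_le_sum_list[of "snd bt" "map snd s"] total by simp
      then show "bt \<in> {JA, JB} \<times> {..a + b}" by (cases bt; cases "fst bt") auto
    qed
    ultimately show "s \<in> {s. set s \<subseteq> {JA, JB} \<times> {..a + b} \<and> length s \<le> a + b}" by simp
  qed
  show "finite {s. set s \<subseteq> {JA, JB} \<times> {..a + b} \<and> length s \<le> a + b}"
    by (rule finite_lists_length_le) simp
qed

lemma schedule_exists: "\<exists>s. is_schedule a b s"
proof -
  have "is_schedule a b ((if a > 0 then [(JA, a)] else []) @ (if b > 0 then [(JB, b)] else []))"
    unfolding is_schedule_iff by auto
  then show ?thesis by blast
qed

lemma fv_le_sched_time: "is_schedule a b s \<Longrightarrow> fv kA kB tA tB v a b \<le> sched_time kA kB tA tB v s"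
  unfolding fv_def
  by (rule Min_le) (use finite_schedules[of a b] in \<open>auto simp: setcompr_eq_image\<close>)

lemma fv_attained: "\<exists>s. is_schedule a b s \<and> sched_time kA kB tA tB v s = fv kA kB tA tB v a b"
proof -
  let ?times = "{sched_time kA kB tA tB v s | s. is_schedule a b s}"
  have "finite ?times"
    using finite_schedules[of a b] by (simp add: setcompr_eq_image)
  moreover have "?times \<noteq> {}"
    using schedule_exists[of a b] by auto
  ultimately have "fv kA kB tA tB v a b \<in> ?times"
    unfolding fv_def by (rule Min_in)
  then show ?thesis by auto
qed

definition nonneg_params ::
    "(nat \<Rightarrow> real) \<Rightarrow> (nat \<Rightarrow> real) \<Rightarrow> (nat \<Rightarrow> real) \<Rightarrow> (nat \<Rightarrow> real) \<Rightarrow> nat \<Rightarrow> bool" where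
  "nonneg_params kA kB tA tB v \<longleftrightarrow> kA v \<ge> 0 \<and> kB v \<ge> 0 \<and> tA v \<ge> 0 \<and> tB v \<ge> 0"

lemma sched_time_Nil [simp]: "sched_time kA kB tA tB v [] = 0"
  and sched_time_Cons [simp]:
    "sched_time kA kB tA tB v (bt # s) = batch_time kA kB tA tB v bt + sched_time kA kB tA tB v s"
  and sched_time_append [simp]:
    "sched_time kA kB tA tB v (s @ s') = sched_time kA kB tA tB v s + sched_time kA kB tA tB v s'"
  unfolding sched_time_def by simp_all

lemma batch_time_nonneg:
  assumes "nonneg_params kA kB tA tB v"
  shows "batch_time kA kB tA tB v bt \<ge> 0"
  using assms unfolding nonneg_params_def by (cases bt; cases "fst bt") auto

lemma sched_time_nonneg:
  assumes "nonneg_params kA kB tA tB v"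
  shows "sched_time kA kB tA tB v s \<ge> 0"
  by (induction s) (simp_all add: batch_time_nonneg[OF assms])

lemma batch_time_JA_mono:
  assumes "nonneg_params kA kB tA tB v" "m \<le> n"
  shows "batch_time kA kB tA tB v (JA, m) \<le> batch_time kA kB tA tB v (JA, n)"
  using assms unfolding nonneg_params_def by (simp add: mult_left_mono power_mono)

lemma schedule_cut_after_last_JA:
  assumes nonneg: "nonneg_params kA kB tA tB v"
    and sched: "is_schedule (Suc x) b s"
  obtains P m c where "is_schedule (Suc x) c (P @ [(JA, m)])"
    and "sched_time kA kB tA tB v (P @ [(JA, m)]) \<le> sched_time kA kB tA tB v s"
proof -
  have pos: "\<forall>bt\<in>set s. snd bt > 0" and adj: "distinct_adj (map fst s)"
    and sum_JA: "sum_list (map snd (filter (\<lambda>bt. fst bt = JA) s)) = Suc x"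
    using sched unfolding is_schedule_iff by auto
  then have "filter (\<lambda>bt. fst bt = JA) s \<noteq> []" by auto
  then have "\<exists>bt\<in>set s. fst bt = JA" by (simp add: filter_empty_conv)
  then obtain P bt R where s: "s = P @ bt # R" and "fst bt = JA"
    and R: "\<forall>bt'\<in>set R. fst bt' \<noteq> JA"
    by (rule split_list_last_propE)
  then obtain m where bt: "bt = (JA, m)" by (cases bt) auto
  have "is_schedule (Suc x) (sum_list (map snd (filter (\<lambda>bt. fst bt = JB) P))) (P @ [(JA, m)])"
    unfolding is_schedule_iff
  proof (intro conjI)
    show "\<forall>bt\<in>set (P @ [(JA, m)]). snd bt > 0"
      using pos unfolding s bt by simp
    have "map fst s = map fst (P @ [(JA, m)]) @ map fst R"
      unfolding s bt by simp
    then show "distinct_adj (map fst (P @ [(JA, m)]))"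
      using adj by (metis distinct_adj_appendD1)
    have "filter (\<lambda>bt. fst bt = JA) R = []"
      using R by (simp add: filter_empty_conv)
    then show "sum_list (map snd (filter (\<lambda>bt. fst bt = JA) (P @ [(JA, m)]))) = Suc x"
      using sum_JA unfolding s bt by simp
  qed simp
  moreover have "sched_time kA kB tA tB v (P @ [(JA, m)]) \<le> sched_time kA kB tA tB v s"
    using sched_time_nonneg[OF nonneg, of R] unfolding s bt by simp
  ultimately show ?thesis by (rule that)
qed

lemma schedule_remove_last_JA_job:
  assumes nonneg: "nonneg_params kA kB tA tB v"
    and sched: "is_schedule (Suc x) c (P @ [(JA, m)])"
  obtains s where "is_schedule x c s"
    and "sched_time kA kB tA tB v s \<le> sched_time kA kB tA tB v (P @ [(JA, m)])"
proof -
  have pos: "\<forall>bt\<in>set P. snd bt > 0" "m > 0"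
    and adj: "distinct_adj (map fst P @ [JA])"
    and sum_JA: "sum_list (map snd (filter (\<lambda>bt. fst bt = JA) P)) + m = Suc x"
    and sum_JB: "sum_list (map snd (filter (\<lambda>bt. fst bt = JB) P)) = c"
    using sched unfolding is_schedule_iff by auto
  show ?thesis
  proof (cases "m = 1")
    case True
    have "is_schedule x c P"
      unfolding is_schedule_iff using pos adj sum_JA sum_JB True by auto
    moreover have "batch_time kA kB tA tB v (JA, m) \<ge> 0"
      using batch_time_nonneg[OF nonneg] .
    ultimately show ?thesis by (intro that[of P]) simp_all
  next
    case False
    have "is_schedule x c (P @ [(JA, m - 1)])"
      unfolding is_schedule_iff using pos adj sum_JA sum_JB False by auto
    moreover have "batch_time kA kB tA tB v (JA, m - 1) \<le> batch_time kA kB tA tB v (JA, m)"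
      using batch_time_JA_mono[OF nonneg] by simp
    ultimately show ?thesis by (intro that[of "P @ [(JA, m - 1)]"]) simp_all
  qed
qed

lemma bset_Suc_meets_bset:
  assumes nonneg: "nonneg_params kA kB tA tB v"
    and "b \<in> bset kA kB tA tB L v (Suc x)"
  obtains c where "c \<in> bset kA kB tA tB L v (Suc x)" and "c \<in> bset kA kB tA tB L v x"
proof -
  let ?T = "sched_time kA kB tA tB v"
  obtain s where s: "is_schedule (Suc x) b s" and "?T s \<le> L"
    using fv_attained[of "Suc x" b kA kB tA tB v] assms(2) unfolding bset_def by auto
  obtain P m c where cut: "is_schedule (Suc x) c (P @ [(JA, m)])" and "?T (P @ [(JA, m)]) \<le> ?T s"
    using schedule_cut_after_last_JA[OF nonneg s] by blast
  with \<open>?T s \<le> L\<close> have cut_le: "?T (P @ [(JA, m)]) \<le> L" by linarith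
  obtain s' where "is_schedule x c s'" and "?T s' \<le> ?T (P @ [(JA, m)])"
    using schedule_remove_last_JA_job[OF nonneg cut] by blast
  with cut_le have "fv kA kB tA tB v x c \<le> L"
    using fv_le_sched_time[OF \<open>is_schedule x c s'\<close>, of kA kB tA tB v] by linarith
  moreover have "fv kA kB tA tB v (Suc x) c \<le> L"
    using fv_le_sched_time[OF cut, of kA kB tA tB v] cut_le by linarith
  ultimately show ?thesis by (intro that) (simp_all add: bset_def)
qed

lemma sum_fun_upd_add:
  fixes f :: "'a \<Rightarrow> 'b::comm_monoid_add"
  assumes "finite A" "j \<in> A"
  shows "sum (f(j := t)) A + f j = sum f A + t"
proof -
  have "sum (f(j := t)) A = t + sum f (A - {j})"
    using assms by (simp add: sum.remove)
  moreover have "sum f A = f j + sum f (A - {j})"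
    using assms by (simp add: sum.remove)
  ultimately show ?thesis by (simp add: ac_simps)
qed

lemma dp_Suc_meets_dp:
  assumes nonneg: "\<forall>i\<in>{1..v}. nonneg_params kA kB tA tB i"
    and "dp kA kB tA tB L v (Suc a) \<noteq> {}"
  shows "dp kA kB tA tB L v a \<inter> dp kA kB tA tB L v (Suc a) \<noteq> {}"
proof -
  obtain x y where x: "(\<Sum>i\<in>{1..v}. x i) = Suc a"
    and y: "\<forall>i\<in>{1..v}. y i \<in> bset kA kB tA tB L i (x i)"
    using assms(2) unfolding dp_def by blast
  have "\<exists>j\<in>{1..v}. x j \<noteq> 0"
  proof (rule ccontr)
    assume "\<not> (\<exists>j\<in>{1..v}. x j \<noteq> 0)"
    then have "(\<Sum>i\<in>{1..v}. x i) = 0" by simp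
    with x show False by simp
  qed
  then obtain j x0 where j: "j \<in> {1..v}" and x0: "x j = Suc x0"
    using not0_implies_Suc by blast
  have "y j \<in> bset kA kB tA tB L j (Suc x0)"
    using y j x0 by metis
  moreover have "nonneg_params kA kB tA tB j"
    using nonneg j by blast
  ultimately obtain c
    where c: "c \<in> bset kA kB tA tB L j (Suc x0)" "c \<in> bset kA kB tA tB L j x0"
    using bset_Suc_meets_bset by blast
  have "(\<Sum>i\<in>{1..v}. (x(j := x0)) i) = a"
    using sum_fun_upd_add[of "{1..v}" j x x0] j x x0 by simp
  moreover have "\<forall>i\<in>{1..v}. (y(j := c)) i \<in> bset kA kB tA tB L i ((x(j := x0)) i)"
    using y c by simp
  ultimately have "sum (y(j := c)) {1..v} \<in> dp kA kB tA tB L v a"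
    unfolding dp_def by blast
  moreover have "\<forall>i\<in>{1..v}. (y(j := c)) i \<in> bset kA kB tA tB L i (x i)"
    using y c x0 by simp
  then have "sum (y(j := c)) {1..v} \<in> dp kA kB tA tB L v (Suc a)"
    unfolding dp_def using x by blast
  ultimately show ?thesis by blast
qed

lemma dp_nonempty_antimono:
  assumes nonneg: "\<forall>i\<in>{1..v}. nonneg_params kA kB tA tB i"
    and "a \<le> a'" "dp kA kB tA tB L v a' \<noteq> {}"
  shows "dp kA kB tA tB L v a \<noteq> {}"
  using assms(2,3)
proof (induction a' rule: dec_induct)
  case (step n)
  then show ?case using dp_Suc_meets_dp[OF nonneg, of L n] by blast
qed

theorem lemma5:
  fixes p :: nat and kA kB tA tB :: "nat \<Rightarrow> real" and L :: real
  assumes "p \<ge> 1"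
    and "\<forall>v\<in>{1..p}. kA v \<ge> 0 \<and> kB v \<ge> 0 \<and> tA v \<ge> 0 \<and> tB v \<ge> 0"
  shows "\<forall>v\<in>{1..p}. \<forall>a::nat.
     (dp kA kB tA tB L v a = {} \<longrightarrow> (\<forall>\<delta>::nat. \<delta> > 0 \<longrightarrow> dp kA kB tA tB L v (a + \<delta>) = {})) \<and>
     (dp kA kB tA tB L v a \<noteq> {} \<and> dp kA kB tA tB L v (a + 1) \<noteq> {} \<longrightarrow>
        (dp kA kB tA tB L v a \<inter> dp kA kB tA tB L v (a + 1) \<noteq> {} \<or>
         (\<exists>b0\<in>dp kA kB tA tB L v a. b0 + 1 \<in> dp kA kB tA tB L v (a + 1))))"
proof (intro ballI allI conjI impI)
  fix v a assume "v \<in> {1..p}"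
  then have nonneg: "\<forall>i\<in>{1..v}. nonneg_params kA kB tA tB i"
    using assms(2) unfolding nonneg_params_def by auto
  show "dp kA kB tA tB L v (a + \<delta>) = {}" if "dp kA kB tA tB L v a = {}" for \<delta>
    using dp_nonempty_antimono[OF nonneg, of a "a + \<delta>"] that by auto
  show "dp kA kB tA tB L v a \<inter> dp kA kB tA tB L v (a + 1) \<noteq> {} \<or>
         (\<exists>b0\<in>dp kA kB tA tB L v a. b0 + 1 \<in> dp kA kB tA tB L v (a + 1))"
    if "dp kA kB tA tB L v a \<noteq> {} \<and> dp kA kB tA tB L v (a + 1) \<noteq> {}"
    using dp_Suc_meets_dp[OF nonneg, of L a] that by simp
qed

end
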